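(* Consider the biased voter model in the dynamic $d$-regular graph model, with $\kappa\le n$ opinions arbitrarily distributed over the nodes of $G_1$, and let $\phi_t$ be a lower bound on the conductance of $G_t$. Assume $\alpha_1\le 1-\epsilon$ for an arbitrarily small constant $\epsilon>0$, and assume that initially at least $c\log n$ nodes hold the preferred opinion $0$, for some constant $c=c(\alpha_1)$. Then, with high probability (i.e. with probability at least $1-1/n$), the preferred opinion prevails (all nodes hold opinion $0$) within at most $\tau'''$ rounds, where $\tau'''$ is the first round such that $\sum_{t=1}^{\tau'''}\phi_t\ge b\log n$, for some constant $b$. In particular, for static graphs ($G_{i+1}=G_i$ for all $i$) of conductance $\phi$, the consensus time is $T=O(\log n/\phi)$ with high probability.
   Context: Graphs are undirected, connected and $d$-regular on the vertex set $V=\{1,\dots,n\}$. For $U\subseteq V$ let $\mathrm{vol}(U)=d|U|$, $m$ the number of edges, and for $u\in U$ let $\lambda_u$ be the number of neighbours of $u$ in $V\setminus U$; the conductance of $G$ is $\phi(G)=\min\{\sum_{u\in U}\lambda_u/\mathrm{vol}(U): U\subset V,\ 0<\mathrm{vol}(U)\le m\}$. Dynamic $d$-regular graph model: an adversary generates a sequence $G_1,G_2,\dots$ of $d$-regular graphs on $V$, redistributing the edges in every round, subject to $G_t$ having conductance at least $\phi_t$, where the sequence $\phi_1,\phi_2,\dots$ is fixed in advance (not random). Biased voter model: there are $\kappa$ opinions $0,\dots,\kappa-1$; opinion $i$ has popularity $\alpha_i$, with $\alpha_0=1>\alpha_1\ge\alpha_2\ge\dots\ge\alpha_{\kappa-1}$;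 opinion $0$ is the preferred opinion. In each synchronous round $t$, every node independently chooses a neighbour in $G_t$ uniformly at random and, if that neighbour holds opinion $i$ (at the beginning of the round), adopts opinion $i$ with probability $\alpha_i$ and otherwise keeps its opinion. The consensus time $T$ is the first round after which all nodes hold the same opinion. *)

theory Defs
  imports "HOL-Probability.Probability"
begin

text \<open>Vertex set V = {1..n}. A graph is an edge relation E on nat.\<close>

definition regular_graph :: "nat \<Rightarrow> nat \<Rightarrow> (nat \<Rightarrow> nat \<Rightarrow> bool) \<Rightarrow> bool" where
  "regular_graph n d E \<longleftrightarrow>
     (\<forall>u v. E u v \<longrightarrow> u \<in> {1..n} \<and> v \<in> {1..n}) \<and>
     (\<forall>u v. E u v \<longrightarrow> E v u) \<and>
     (\<forall>u. \<not> E u u) \<and>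
     (\<forall>v\<in>{1..n}. card {u. E v u} = d) \<and>
     (\<forall>u\<in>{1..n}. \<forall>v\<in>{1..n}. E\<^sup>*\<^sup>* u v)"

definition num_edges :: "(nat \<Rightarrow> nat \<Rightarrow> bool) \<Rightarrow> nat" where
  "num_edges E = card {(u, v). E u v \<and> u < v}"

definition out_deg :: "nat \<Rightarrow> (nat \<Rightarrow> nat \<Rightarrow> bool) \<Rightarrow> nat set \<Rightarrow> nat \<Rightarrow> nat" where
  "out_deg n E U u = card {w \<in> {1..n} - U. E u w}"

definition vol :: "nat \<Rightarrow> nat set \<Rightarrow> real" where
  "vol d U = real d * real (card U)"

definition conductance :: "nat \<Rightarrow> nat \<Rightarrow> (nat \<Rightarrow> nat \<Rightarrow> bool) \<Rightarrow> real" where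
  "conductance n d E = Min {(\<Sum>u\<in>U. real (out_deg n E U u)) / vol d U | U.
      U \<subset> {1..n} \<and> 0 < vol d U \<and> vol d U \<le> real (num_edges E)}"

definition node_step :: "(nat \<Rightarrow> real) \<Rightarrow> (nat \<Rightarrow> nat \<Rightarrow> bool) \<Rightarrow> (nat \<Rightarrow> nat) \<Rightarrow> nat \<Rightarrow> nat pmf" where
  "node_step \<alpha> E x v =
     bind_pmf (pmf_of_set {u. E v u}) (\<lambda>u.
       map_pmf (\<lambda>b. if b then x u else x v) (bernoulli_pmf (\<alpha> (x u))))"

definition round_step :: "nat \<Rightarrow> (nat \<Rightarrow> real) \<Rightarrow> (nat \<Rightarrow> nat \<Rightarrow> bool) \<Rightarrow> (nat \<Rightarrow> nat) \<Rightarrow> (nat \<Rightarrow> nat) pmf" where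
  "round_step n \<alpha> E x = Pi_pmf {1..n} 0 (node_step \<alpha> E x)"

text \<open>Distribution of the configuration after t rounds; the adversary Adv chooses the
  graph G_t of round t, possibly depending on the configuration at the start of the round.\<close>
primrec run :: "nat \<Rightarrow> (nat \<Rightarrow> real) \<Rightarrow> (nat \<Rightarrow> (nat \<Rightarrow> nat) \<Rightarrow> (nat \<Rightarrow> nat \<Rightarrow> bool))
    \<Rightarrow> (nat \<Rightarrow> nat) \<Rightarrow> nat \<Rightarrow> (nat \<Rightarrow> nat) pmf" where
  "run n \<alpha> Adv x0 0 = return_pmf x0"
| "run n \<alpha> Adv x0 (Suc t) = bind_pmf (run n \<alpha> Adv x0 t) (\<lambda>x. round_step n \<alpha> (Adv (Suc t) x) x)"

end

theory Submission
  imports Defs "HOL-Library.Log_Nat"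
begin

text \<open>Let \<open>X\<close> be the number of nodes holding the preferred opinion 0. A 0-node adopts another
  opinion only by copying a neighbour of another opinion, which succeeds with probability at
  most \<open>1 - \<epsilon>\<close>, while a non-0-node copying a 0-neighbour always adopts 0. Since the nodes
  update independently and, by the conductance bound, at least \<open>\<phi> d min(X, n - X)\<close> edges
  leave the 0-nodes, for every \<open>0 < s \<le> \<epsilon> / 4\<close> one round gives
  \<open>E[exp(-s X')] \<le> exp(-s X - (\<epsilon> s / 4) \<phi> min(X, n - X))\<close>.

  For \<open>s = \<epsilon> / 4\<close> this makes \<open>exp(-s X)\<close> a supermartingale, so opinion 0 dies out with
  probability at most \<open>exp(-s X\<^sub>0) \<le> n\<^sup>-\<^sup>2\<close>. Summing the bounds over the scales
  \<open>s\<^sub>j = \<epsilon> / (4 \<cdot> 2\<^sup>j)\<close>, \<open>j \<le> log\<^sub>2 n\<close>, gives the potential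
  \<open>\<Sum>\<^sub>j s\<^sub>j (exp(-s\<^sub>j X) - exp(-s\<^sub>j n))\<close>: it vanishes at \<open>X = n\<close>, is of order
  \<open>n\<^sup>-\<^sup>2\<close> for \<open>1 \<le> X < n\<close>, and contracts by a factor \<open>1 - \<delta> \<phi>\<^sub>t\<close> per round while
  \<open>X \<ge> 1\<close> (for large \<open>X\<close> by convexity of \<open>exp\<close>; for small \<open>X\<close> because the scale with
  \<open>s\<^sub>j X \<approx> 1\<close> carries a constant fraction of it). After rounds of total conductance
  \<open>b log n\<close> its expectation is below \<open>n\<^sup>-\<^sup>5\<close>, and Markov's inequality bounds the
  probability that the run has not reached consensus on 0.\<close>

section \<open>Regular graphs and conductance\<close>

lemma
  assumes "regular_graph n d E"
  shows regular_graph_edge_vertices: "E u v \<Longrightarrow> u \<in> {1..n} \<and> v \<in> {1..n}"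
    and regular_graph_sym: "E u v \<Longrightarrow> E v u"
    and regular_graph_irrefl: "\<not> E u u"
    and regular_graph_degree: "v \<in> {1..n} \<Longrightarrow> card {u. E v u} = d"
    and regular_graph_connected: "u \<in> {1..n} \<Longrightarrow> v \<in> {1..n} \<Longrightarrow> E\<^sup>*\<^sup>* u v"
  using assms unfolding regular_graph_def by blast+

lemma regular_graph_neighbours_subset: "regular_graph n d E \<Longrightarrow> {u. E v u} \<subseteq> {1..n}"
  using regular_graph_edge_vertices by blast

lemma regular_graph_neighbours_finite: "regular_graph n d E \<Longrightarrow> finite {u. E v u}"
  by (metis finite_atLeastAtMost finite_subset regular_graph_neighbours_subset)

lemma regular_graph_degree_pos:
  assumes "regular_graph n d E" "2 \<le> n"
  shows "0 < d"
proof -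
  have "E\<^sup>*\<^sup>* 1 2" using regular_graph_connected[OF assms(1)] assms(2) by auto
  then obtain u where "E 1 u" by (cases rule: converse_rtranclpE) auto
  then have "card {u. E 1 u} > 0"
    using regular_graph_neighbours_finite[OF assms(1)] card_gt_0_iff by blast
  then show ?thesis using regular_graph_degree[OF assms(1), of 1] assms(2) by simp
qed

lemma regular_graph_neighbours_nonempty:
  assumes "regular_graph n d E" "2 \<le> n" "v \<in> {1..n}"
  shows "{u. E v u} \<noteq> {}"
  using regular_graph_degree[OF assms(1,3)] regular_graph_degree_pos[OF assms(1,2)] by force

lemma regular_graph_num_edges:
  assumes "regular_graph n d E"
  shows "2 * num_edges E = n * d"
proof -
  let ?D = "{(u, v). E u v}"
  let ?L = "{(u, v). E u v \<and> u < v}"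
  let ?G = "{(u, v). E u v \<and> v < u}"
  have D: "?D = Sigma {1..n} (\<lambda>u. {v. E u v})"
    using regular_graph_edge_vertices[OF assms] by auto
  have "finite ?D" unfolding D using regular_graph_neighbours_finite[OF assms] by auto
  then have fin: "finite ?L" "finite ?G" by (auto elim: rev_finite_subset)
  have "?D = ?L \<union> ?G"
    using regular_graph_irrefl[OF assms] by (force simp: not_less le_less)
  moreover have "?G = prod.swap ` ?L"
    using regular_graph_sym[OF assms] by auto
  ultimately have "card ?D = 2 * card ?L"
    using fin by (simp add: card_Un_disjoint card_image inj_on_def disjoint_iff)
  moreover have "card ?D = n * d" unfolding D
    by (simp add: regular_graph_neighbours_finite[OF assms] regular_graph_degree[OF assms])
  ultimately show ?thesis unfolding num_edges_def by simp
qed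

lemma cut_size_complement:
  assumes "regular_graph n d E" "S \<subseteq> {1..n}"
  shows "(\<Sum>v\<in>S. out_deg n E S v) = (\<Sum>v\<in>{1..n} - S. out_deg n E ({1..n} - S) v)"
proof -
  have fS: "finite S" using assms(2) by (rule finite_subset) simp
  have "Sigma S (\<lambda>v. {w \<in> {1..n} - S. E v w}) = prod.swap ` Sigma ({1..n} - S) (\<lambda>v. {w \<in> S. E v w})"
    using regular_graph_sym[OF assms(1)] assms(2) by auto
  then have "card (Sigma S (\<lambda>v. {w \<in> {1..n} - S. E v w})) = card (Sigma ({1..n} - S) (\<lambda>v. {w \<in> S. E v w}))"
    by (simp add: card_image)
  moreover have "{1..n} - ({1..n} - S) = S" using assms(2) by auto
  ultimately show ?thesis
    unfolding out_deg_def using fS by simp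
qed

lemma conductance_le_cut_ratio:
  assumes "regular_graph n d E" "2 \<le> n" "U \<subseteq> {1..n}" "U \<noteq> {}" "2 * card U \<le> n"
  shows "conductance n d E \<le> (\<Sum>u\<in>U. real (out_deg n E U u)) / vol d U"
proof -
  have d: "0 < d" using regular_graph_degree_pos assms(1,2) by blast
  have "card U > 0" using assms(3,4) by (meson card_gt_0_iff finite_atLeastAtMost finite_subset)
  then have "U \<subset> {1..n}" using assms(3,5) by auto
  moreover have "0 < vol d U" unfolding vol_def using d \<open>card U > 0\<close> by simp
  moreover have "2 * vol d U \<le> 2 * real (num_edges E)"
  proof -
    have "real d * (2 * real (card U)) \<le> real d * real n"
      using assms(5) by (intro mult_left_mono) (simp_all add: of_nat_mono[of "2 * card U" n, simplified])
    then show ?thesis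
      unfolding vol_def using arg_cong[OF regular_graph_num_edges[OF assms(1)], of real]
      by (simp add: mult_ac)
  qed
  ultimately have "(\<Sum>u\<in>U. real (out_deg n E U u)) / vol d U \<in> {(\<Sum>u\<in>U. real (out_deg n E U u)) / vol d U | U.
      U \<subset> {1..n} \<and> 0 < vol d U \<and> vol d U \<le> real (num_edges E)}" by auto
  moreover have "finite {(\<Sum>u\<in>U. real (out_deg n E U u)) / vol d U | U.
      U \<subset> {1..n} \<and> 0 < vol d U \<and> vol d U \<le> real (num_edges E)}"
    by (rule finite_subset[of _ "(\<lambda>U. (\<Sum>u\<in>U. real (out_deg n E U u)) / vol d U) ` Pow {1..n}"]) auto
  ultimately show ?thesis unfolding conductance_def by (rule Min_le[rotated])
qed

lemma conductance_le_1:
  assumes "regular_graph n d E" "2 \<le> n"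
  shows "conductance n d E \<le> 1"
proof -
  have "conductance n d E \<le> real (out_deg n E {1} 1) / real d"
    using conductance_le_cut_ratio[OF assms, of "{1}"] assms(2) by (simp add: vol_def)
  also have "out_deg n E {1} 1 \<le> card {u. E 1 u}"
    unfolding out_deg_def by (rule card_mono[OF regular_graph_neighbours_finite[OF assms(1)]]) auto
  then have "real (out_deg n E {1} 1) / real d \<le> 1"
    using regular_graph_degree[OF assms(1), of 1] assms(2)
    by (cases "d = 0") (simp_all add: divide_le_eq_1)
  finally show ?thesis .
qed

lemma cut_ge_conductance:
  assumes "regular_graph n d E" "2 \<le> n" "\<phi> \<le> conductance n d E" "S \<subseteq> {1..n}"
  shows "max \<phi> 0 * real (min (card S) (n - card S)) * real d \<le> (\<Sum>v\<in>S. real (out_deg n E S v))"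
proof -
  have d: "0 < d" using regular_graph_degree_pos assms(1,2) by blast
  have cut_ge: "\<phi> * real (card U) * real d \<le> (\<Sum>u\<in>U. real (out_deg n E U u))"
    if "U \<subseteq> {1..n}" "U \<noteq> {}" "2 * card U \<le> n" for U
  proof -
    have "\<phi> \<le> (\<Sum>u\<in>U. real (out_deg n E U u)) / (real d * real (card U))"
      using conductance_le_cut_ratio[OF assms(1,2) that] assms(3) unfolding vol_def by linarith
    moreover have "card U > 0" using that(1,2) by (meson card_gt_0_iff finite_atLeastAtMost finite_subset)
    ultimately show ?thesis using d by (simp add: pos_le_divide_eq mult.commute mult.left_commute)
  qed
  have cT: "card ({1..n} - S) = n - card S" using assms(4) by (simp add: card_Diff_subset finite_subset)
  have "card S \<le> n" using card_mono[OF _ assms(4)] by simp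
  show ?thesis
  proof (cases "\<phi> \<le> 0 \<or> card S = 0 \<or> card S = n")
    case True
    then show ?thesis by (auto simp: sum_nonneg)
  next
    case False
    then have "0 < \<phi>" "S \<noteq> {}" by auto
    have "{1..n} - S \<noteq> {}"
      using cT False \<open>card S \<le> n\<close> by (metis card.empty diff_is_0_eq le_antisym)
    show ?thesis
    proof (cases "2 * card S \<le> n")
      case True
      then have "min (card S) (n - card S) = card S" by simp
      then show ?thesis using cut_ge[OF assms(4) \<open>S \<noteq> {}\<close> True] \<open>0 < \<phi>\<close> by simp
    next
      case False
      have "\<phi> * real (n - card S) * real d \<le> (\<Sum>v\<in>{1..n} - S. real (out_deg n E ({1..n} - S) v))"
        using cut_ge[of "{1..n} - S"] \<open>{1..n} - S \<noteq> {}\<close> False cT by simp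
      also have "\<dots> = (\<Sum>v\<in>S. real (out_deg n E S v))"
        using cut_size_complement[OF assms(1,4)] by (metis of_nat_sum)
      finally show ?thesis using False \<open>0 < \<phi>\<close> by (simp add: min_def)
    qed
  qed
qed

section \<open>One round of the biased voter model\<close>

definition zero_nodes :: "nat \<Rightarrow> (nat \<Rightarrow> nat) \<Rightarrow> nat set" where
  "zero_nodes n y = {v\<in>{1..n}. y v = 0}"

lemma zero_nodes_subset: "zero_nodes n y \<subseteq> {1..n}"
  unfolding zero_nodes_def by auto

lemma card_zero_nodes_le: "card (zero_nodes n y) \<le> n"
  using card_mono[OF _ zero_nodes_subset] by fastforce

lemma pmf_map_bernoulli_if:
  assumes "0 \<le> p" "p \<le> 1"
  shows "pmf (map_pmf (\<lambda>b. if b then a else a') (bernoulli_pmf p)) z =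
    p * of_bool (a = z) + (1 - p) * of_bool (a' = z)"
  unfolding map_pmf_def pmf_bind using assms by (simp add: indicator_def)

lemma expectation_if_eq:
  fixes p :: "'a pmf"
  shows "measure_pmf.expectation p (\<lambda>a. if a = z then \<theta> else 1) = 1 - (1 - \<theta>) * pmf p z"
proof -
  have "(\<lambda>a. if a = z then \<theta> else 1) = (\<lambda>a. 1 - (1 - \<theta>) * indicator {z} a)"
    by (auto simp: indicator_def)
  moreover have "integrable (measure_pmf p) (\<lambda>a. (1 - \<theta>) * indicator {z} a :: real)"
    by (intro integrable_mult_right measure_pmf.integrable_const_bound[where B=1]) auto
  ultimately show ?thesis by (simp add: measure_pmf_single)
qed

text \<open>The nodes update independently, so the moment generating function of the number of
  0-nodes factorises into one factor per node.\<close>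

lemma expectation_round_step_exp_zero_nodes:
  assumes "0 \<le> \<theta>"
  shows "measure_pmf.expectation (round_step n \<alpha> E x) (\<lambda>y. \<theta> ^ card (zero_nodes n y))
       = (\<Prod>v\<in>{1..n}. 1 - (1 - \<theta>) * pmf (node_step \<alpha> E x v) 0)"
proof -
  have "\<theta> ^ card (zero_nodes n y) = (\<Prod>v\<in>{1..n}. if y v = 0 then \<theta> else 1)" for y
    unfolding zero_nodes_def by (simp add: prod.If_cases Int_def)
  then have "measure_pmf.expectation (round_step n \<alpha> E x) (\<lambda>y. \<theta> ^ card (zero_nodes n y))
      = measure_pmf.expectation (round_step n \<alpha> E x) (\<lambda>y. \<Prod>v\<in>{1..n}. if y v = 0 then \<theta> else 1)"
    by presburger
  also have "\<dots> = (\<Prod>v\<in>{1..n}. measure_pmf.expectation (node_step \<alpha> E x v) (\<lambda>a. if a = 0 then \<theta> else 1))"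
    unfolding round_step_def using assms
    by (intro expectation_prod_Pi_pmf measure_pmf.integrable_const_bound[where B="max \<theta> 1"]) auto
  finally show ?thesis by (simp add: expectation_if_eq)
qed

locale biased_voter =
  fixes n \<kappa> :: nat and \<alpha> :: "nat \<Rightarrow> real" and \<epsilon> :: real
  assumes two_le_n: "2 \<le> n"
    and \<alpha>_preferred: "\<alpha> 0 = 1"
    and \<alpha>_other: "\<And>i. 1 \<le> i \<Longrightarrow> i < \<kappa> \<Longrightarrow> 0 \<le> \<alpha> i \<and> \<alpha> i \<le> 1 - \<epsilon>"
    and \<epsilon>_pos: "0 < \<epsilon>"
    and \<epsilon>_le_half: "\<epsilon> \<le> 1/2"
begin

lemma pmf_node_step:
  assumes "regular_graph n d E" "\<forall>w\<in>{1..n}. x w < \<kappa>" "v \<in> {1..n}"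
  shows "pmf (node_step \<alpha> E x v) z = (\<Sum>u\<in>{u. E v u}.
    \<alpha> (x u) * of_bool (x u = z) + (1 - \<alpha> (x u)) * of_bool (x v = z)) / real d"
proof -
  have "pmf (node_step \<alpha> E x v) z = (\<Sum>u\<in>{u. E v u}.
      pmf (map_pmf (\<lambda>b. if b then x u else x v) (bernoulli_pmf (\<alpha> (x u)))) z) / real (card {u. E v u})"
    unfolding node_step_def
    by (rule pmf_bind_pmf_of_set[OF regular_graph_neighbours_nonempty[OF assms(1) two_le_n assms(3)]
          regular_graph_neighbours_finite[OF assms(1)]])
  also have "\<dots> = (\<Sum>u\<in>{u. E v u}.
      \<alpha> (x u) * of_bool (x u = z) + (1 - \<alpha> (x u)) * of_bool (x v = z)) / real d"
  proof (intro arg_cong2[where f = "(/)"] sum.cong refl)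
    fix u assume "u \<in> {u. E v u}"
    then have "0 \<le> \<alpha> (x u) \<and> \<alpha> (x u) \<le> 1"
      using \<alpha>_other[of "x u"] \<alpha>_preferred \<epsilon>_pos assms(2) regular_graph_edge_vertices[OF assms(1)]
      by (cases "x u = 0") auto
    then show "pmf (map_pmf (\<lambda>b. if b then x u else x v) (bernoulli_pmf (\<alpha> (x u)))) z
        = \<alpha> (x u) * of_bool (x u = z) + (1 - \<alpha> (x u)) * of_bool (x v = z)"
      by (simp add: pmf_map_bernoulli_if)
  qed (simp add: regular_graph_degree[OF assms(1,3)])
  finally show ?thesis .
qed

lemma pmf_node_step_zero_of_zero:
  assumes "regular_graph n d E" "\<forall>w\<in>{1..n}. x w < \<kappa>" "v \<in> zero_nodes n x"
  shows "1 - (1 - \<epsilon>) * real (out_deg n E (zero_nodes n x) v) / real d \<le> pmf (node_step \<alpha> E x v) 0"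
proof -
  let ?N = "{u. E v u}"
  have v: "v \<in> {1..n}" "x v = 0" using assms(3) unfolding zero_nodes_def by auto
  have d: "0 < d" using regular_graph_degree_pos[OF assms(1) two_le_n] .
  have pmf_eq: "pmf (node_step \<alpha> E x v) 0 = (\<Sum>u\<in>?N. \<alpha> (x u) * of_bool (x u = 0) + (1 - \<alpha> (x u))) / real d"
    using pmf_node_step[OF assms(1,2) v(1), of 0] v(2) by simp
  have "1 - (1 - \<epsilon>) * of_bool (x u \<noteq> 0) \<le> \<alpha> (x u) * of_bool (x u = 0) + (1 - \<alpha> (x u))"
    if "u \<in> ?N" for u
    using \<alpha>_other[of "x u"] \<alpha>_preferred assms(2) regular_graph_edge_vertices[OF assms(1)] that
    by (cases "x u = 0") auto
  then have "(\<Sum>u\<in>?N. 1 - (1 - \<epsilon>) * of_bool (x u \<noteq> 0))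
      \<le> (\<Sum>u\<in>?N. \<alpha> (x u) * of_bool (x u = 0) + (1 - \<alpha> (x u)))"
    by (rule sum_mono)
  moreover have "(\<Sum>u\<in>?N. 1 - (1 - \<epsilon>) * of_bool (x u \<noteq> 0))
      = real d - (1 - \<epsilon>) * real (out_deg n E (zero_nodes n x) v)"
  proof -
    have "?N \<inter> {u. x u \<noteq> 0} = {w \<in> {1..n} - zero_nodes n x. E v w}"
      using regular_graph_edge_vertices[OF assms(1)] by (auto simp: zero_nodes_def)
    then show ?thesis
      using regular_graph_neighbours_finite[OF assms(1)] regular_graph_degree[OF assms(1) v(1)]
      by (simp add: sum_subtractf sum_distrib_left[symmetric] out_deg_def)
  qed
  ultimately have "(real d - (1 - \<epsilon>) * real (out_deg n E (zero_nodes n x) v)) / real d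
      \<le> pmf (node_step \<alpha> E x v) 0"
    unfolding pmf_eq using d by (simp add: divide_right_mono)
  then show ?thesis using d by (simp add: diff_divide_distrib)
qed

lemma pmf_node_step_zero_of_nonzero:
  assumes "regular_graph n d E" "\<forall>w\<in>{1..n}. x w < \<kappa>" "v \<in> {1..n} - zero_nodes n x"
  shows "real (out_deg n E ({1..n} - zero_nodes n x) v) / real d \<le> pmf (node_step \<alpha> E x v) 0"
proof -
  let ?N = "{u. E v u}"
  have v: "v \<in> {1..n}" "x v \<noteq> 0" using assms(3) unfolding zero_nodes_def by auto
  have "(\<Sum>u\<in>?N. \<alpha> (x u) * of_bool (x u = 0) + (1 - \<alpha> (x u)) * of_bool (x v = 0))
      = (\<Sum>u\<in>?N. of_bool (x u = 0))"
    using v(2) \<alpha>_preferred by (intro sum.cong refl) (simp add: of_bool_def)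
  also have "\<dots> = real (card (?N \<inter> {u. x u = 0}))"
    using regular_graph_neighbours_finite[OF assms(1)] by simp
  also have "?N \<inter> {u. x u = 0} = {w \<in> {1..n} - ({1..n} - zero_nodes n x). E v w}"
    using regular_graph_edge_vertices[OF assms(1)] by (auto simp: zero_nodes_def)
  finally show ?thesis
    using pmf_node_step[OF assms(1,2) v(1), of 0] by (simp add: out_deg_def)
qed
end

lemma half_le_one_minus_exp_neg:
  fixes s :: real
  assumes "0 \<le> s" "s \<le> 1"
  shows "s / 2 \<le> 1 - exp (- s)"
proof -
  have "exp (- s) \<le> 1 / (1 + s)"
    using exp_ge_add_one_self[of s] assms by (simp add: exp_minus field_simps)
  also have "1 / (1 + s) \<le> 1 - s / 2"
    using assms mult_left_le[of s s] by (simp add: field_simps)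
  finally show ?thesis by simp
qed

lemma exp_neg_contraction_rate:
  fixes e s :: real
  assumes "0 < e" "e \<le> 1/2" "0 < s" "s \<le> e / 4"
  shows "e * s / 4 \<le> (1 - exp (- s)) * (1 - (1 - e) / exp (- s))"
proof -
  have "(1 - e) * exp s \<le> (1 - e) * (1 + 2 * s)"
    using real_exp_bound_lemma[of s] assms by (intro mult_left_mono) auto
  also have "\<dots> \<le> (1 - e) * (1 + e / 2)"
    using assms by (intro mult_left_mono) auto
  also have "\<dots> \<le> 1 - e / 2"
    by (simp add: algebra_simps)
  finally have "e / 2 \<le> 1 - (1 - e) / exp (- s)" by (simp add: exp_minus field_simps)
  moreover have "s / 2 \<le> 1 - exp (- s)" using half_le_one_minus_exp_neg[of s] assms by simp
  ultimately have "(s / 2) * (e / 2) \<le> (1 - exp (- s)) * (1 - (1 - e) / exp (- s))"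
    using assms by (intro mult_mono) auto
  then show ?thesis by (simp add: mult.commute)
qed

lemma one_minus_mult_pmf_nonneg:
  assumes "0 \<le> \<theta>" "\<theta> \<le> 1"
  shows "0 \<le> 1 - (1 - \<theta>) * pmf p z"
  using mult_left_le[OF pmf_le_1, of "1 - \<theta>" p z] assms by simp

context biased_voter
begin

lemma node_factor_of_zero:
  assumes "regular_graph n d E" "\<forall>w\<in>{1..n}. x w < \<kappa>" "v \<in> zero_nodes n x" "0 < \<theta>" "\<theta> < 1"
  shows "1 - (1 - \<theta>) * pmf (node_step \<alpha> E x v) 0
    \<le> \<theta> * exp ((1 - \<theta>) * (1 - \<epsilon>) / (\<theta> * real d) * real (out_deg n E (zero_nodes n x) v))"
proof -
  let ?a = "real (out_deg n E (zero_nodes n x) v)"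
  have d: "0 < real d" using regular_graph_degree_pos[OF assms(1) two_le_n] by simp
  have "1 - (1 - \<theta>) * pmf (node_step \<alpha> E x v) 0 \<le> 1 - (1 - \<theta>) * (1 - (1 - \<epsilon>) * ?a / real d)"
    using pmf_node_step_zero_of_zero[OF assms(1-3)] assms(5) by (simp add: mult_left_mono)
  also have "\<dots> = \<theta> * (1 + (1 - \<theta>) * (1 - \<epsilon>) / (\<theta> * real d) * ?a)"
    using assms(4) d by (simp add: field_simps)
  also have "\<dots> \<le> \<theta> * exp ((1 - \<theta>) * (1 - \<epsilon>) / (\<theta> * real d) * ?a)"
    using assms(4) exp_ge_add_one_self by (intro mult_left_mono) auto
  finally show ?thesis .
qed

lemma node_factor_of_nonzero:
  assumes "regular_graph n d E" "\<forall>w\<in>{1..n}. x w < \<kappa>" "v \<in> {1..n} - zero_nodes n x" "\<theta> < 1"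
  shows "1 - (1 - \<theta>) * pmf (node_step \<alpha> E x v) 0
    \<le> exp (- ((1 - \<theta>) / real d) * real (out_deg n E ({1..n} - zero_nodes n x) v))"
proof -
  let ?b = "real (out_deg n E ({1..n} - zero_nodes n x) v)"
  have "1 - (1 - \<theta>) * pmf (node_step \<alpha> E x v) 0 \<le> 1 + (- ((1 - \<theta>) / real d) * ?b)"
    using mult_left_mono[OF pmf_node_step_zero_of_nonzero[OF assms(1-3)], of "1 - \<theta>"] assms(4)
    by simp
  also have "\<dots> \<le> exp (- ((1 - \<theta>) / real d) * ?b)" by (rule exp_ge_add_one_self)
  finally show ?thesis .
qed

lemma expectation_round_step_exp_neg_le_cut:
  assumes "regular_graph n d E" "\<forall>w\<in>{1..n}. x w < \<kappa>" "0 < s"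
  defines "S \<equiv> zero_nodes n x"
  shows "measure_pmf.expectation (round_step n \<alpha> E x) (\<lambda>y. exp (- s * real (card (zero_nodes n y))))
    \<le> exp (- s * real (card S) - (1 - exp (- s)) * (1 - (1 - \<epsilon>) / exp (- s))
          * ((\<Sum>v\<in>S. real (out_deg n E S v)) / real d))"
proof -
  define \<theta> where "\<theta> = exp (- s)"
  define P where "P v = pmf (node_step \<alpha> E x v) 0" for v
  define C where "C = (\<Sum>v\<in>S. real (out_deg n E S v))"
  define r where "r = (1 - \<theta>) * (1 - \<epsilon>) / (\<theta> * real d)"
  have \<theta>: "0 < \<theta>" "\<theta> < 1" unfolding \<theta>_def using assms(3) by auto
  have d: "0 < real d" using regular_graph_degree_pos[OF assms(1) two_le_n] by simp
  have S: "S \<subseteq> {1..n}" "finite S"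
    unfolding S_def by (rule zero_nodes_subset, rule finite_subset[OF zero_nodes_subset]) simp
  have C_complement: "C = (\<Sum>v\<in>{1..n} - S. real (out_deg n E ({1..n} - S) v))"
    unfolding C_def using cut_size_complement[OF assms(1) S(1)] by (metis of_nat_sum)
  have \<theta>_power: "exp (- s * real k) = \<theta> ^ k" for k
    unfolding \<theta>_def by (simp add: exp_of_nat_mult[symmetric] mult.commute)
  have "measure_pmf.expectation (round_step n \<alpha> E x) (\<lambda>y. exp (- s * real (card (zero_nodes n y))))
      = (\<Prod>v\<in>{1..n}. 1 - (1 - \<theta>) * P v)"
    unfolding P_def \<theta>_power using expectation_round_step_exp_zero_nodes[of \<theta>] \<theta> by simp
  also have "\<dots> = (\<Prod>v\<in>{1..n} - S. 1 - (1 - \<theta>) * P v) * (\<Prod>v\<in>S. 1 - (1 - \<theta>) * P v)"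
    by (rule prod.subset_diff[OF S(1)]) simp
  also have "\<dots> \<le> (\<Prod>v\<in>{1..n} - S. exp (- ((1 - \<theta>) / real d) * real (out_deg n E ({1..n} - S) v)))
      * (\<Prod>v\<in>S. \<theta> * exp (r * real (out_deg n E S v)))"
    unfolding P_def S_def r_def using \<theta>
    by (intro mult_mono prod_mono prod_nonneg conjI one_minus_mult_pmf_nonneg
        node_factor_of_nonzero[OF assms(1,2)] node_factor_of_zero[OF assms(1,2)]) auto
  also have "\<dots> = exp (- ((1 - \<theta>) / real d) * C) * (\<theta> ^ card S * exp (r * C))"
  proof -
    have "(\<Prod>v\<in>{1..n} - S. exp (- ((1 - \<theta>) / real d) * real (out_deg n E ({1..n} - S) v)))
        = exp (- ((1 - \<theta>) / real d) * C)"
      unfolding C_complement by (simp add: exp_sum sum_distrib_left)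
    moreover have "(\<Prod>v\<in>S. \<theta> * exp (r * real (out_deg n E S v))) = \<theta> ^ card S * exp (r * C)"
      using S(2) by (simp add: C_def exp_sum prod.distrib sum_distrib_left)
    ultimately show ?thesis by simp
  qed
  also have "\<dots> = exp (- s * real (card S) + (r - (1 - \<theta>) / real d) * C)"
    unfolding \<theta>_power[symmetric] by (simp add: algebra_simps flip: exp_add)
  also have "(r - (1 - \<theta>) / real d) * C = - ((1 - \<theta>) * (1 - (1 - \<epsilon>) / \<theta>)) * (C / real d)"
    unfolding r_def using \<theta> d by (simp add: field_simps)
  finally show ?thesis unfolding C_def \<theta>_def by simp
qed

text \<open>The key one-round estimate: a drift of \<open>\<epsilon> s / 4\<close> per cut edge (normalised by \<open>d\<close>),
  and by the conductance bound there are at least \<open>\<phi> d min(X, n - X)\<close> cut edges.\<close>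

lemma expectation_round_step_exp_neg_zero_nodes:
  assumes "regular_graph n d E" "\<phi> \<le> conductance n d E" "\<forall>w\<in>{1..n}. x w < \<kappa>"
    and "0 < s" "s \<le> \<epsilon> / 4"
  defines "X \<equiv> card (zero_nodes n x)"
  shows "measure_pmf.expectation (round_step n \<alpha> E x) (\<lambda>y. exp (- s * real (card (zero_nodes n y))))
    \<le> exp (- s * real X - \<epsilon> * s / 4 * (max \<phi> 0 * real (min X (n - X))))"
proof (rule order_trans[OF expectation_round_step_exp_neg_le_cut[OF assms(1,3,4)]])
  let ?S = "zero_nodes n x"
  have rate: "\<epsilon> * s / 4 \<le> (1 - exp (- s)) * (1 - (1 - \<epsilon>) / exp (- s))"
    using exp_neg_contraction_rate \<epsilon>_pos \<epsilon>_le_half assms(4,5) by blast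
  have "0 \<le> \<epsilon> * s / 4" using \<epsilon>_pos assms(4) by simp
  have "\<epsilon> * s / 4 * (max \<phi> 0 * real (min X (n - X)))
      \<le> (1 - exp (- s)) * (1 - (1 - \<epsilon>) / exp (- s)) * ((\<Sum>v\<in>?S. real (out_deg n E ?S v)) / real d)"
  proof (rule mult_mono[OF rate])
    show "max \<phi> 0 * real (min X (n - X)) \<le> (\<Sum>v\<in>?S. real (out_deg n E ?S v)) / real d"
      using cut_ge_conductance[OF assms(1) two_le_n assms(2) zero_nodes_subset]
        regular_graph_degree_pos[OF assms(1) two_le_n]
      by (simp add: X_def field_simps)
  qed (use order_trans[OF \<open>0 \<le> \<epsilon> * s / 4\<close> rate] in auto)
  then show "exp (- s * real (card ?S) - (1 - exp (- s)) * (1 - (1 - \<epsilon>) / exp (- s))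
        * ((\<Sum>v\<in>?S. real (out_deg n E ?S v)) / real d))
      \<le> exp (- s * real X - \<epsilon> * s / 4 * (max \<phi> 0 * real (min X (n - X))))"
    unfolding X_def by simp
qed

end

section \<open>A multiscale potential\<close>

definition potential :: "real \<Rightarrow> nat \<Rightarrow> nat \<Rightarrow> real \<Rightarrow> real" where
  "potential s0 J n X =
    (\<Sum>j\<le>J. s0 / 2 ^ j * (exp (- (s0 / 2 ^ j) * X) - exp (- (s0 / 2 ^ j) * real n)))"

lemma scale_term_nonneg:
  fixes s X :: real
  assumes "0 \<le> s" "X \<le> N"
  shows "0 \<le> s * (exp (- s * X) - exp (- s * N))"
  using assms by (simp add: mult_left_mono)

lemma potential_nonneg:
  assumes "0 \<le> s0" "X \<le> real n"
  shows "0 \<le> potential s0 J n X"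
  unfolding potential_def using assms by (intro sum_nonneg scale_term_nonneg) auto

lemma potential_le_1:
  assumes "0 \<le> s0" "s0 \<le> 1/2" "0 \<le> X"
  shows "potential s0 J n X \<le> 1"
proof -
  have "potential s0 J n X \<le> (\<Sum>j\<le>J. s0 / 2 ^ j)"
    unfolding potential_def
  proof (intro sum_mono mult_left_le)
    fix j
    have "exp (- (s0 / 2 ^ j) * X) \<le> 1" using assms by simp
    then show "exp (- (s0 / 2 ^ j) * X) - exp (- (s0 / 2 ^ j) * real n) \<le> 1"
      using exp_gt_zero[of "- (s0 / 2 ^ j) * real n"] by linarith
  qed (use assms in simp)
  also have "\<dots> = 2 * s0 - s0 / 2 ^ J"
    by (induction J) (simp_all add: field_simps)
  also have "\<dots> \<le> 1"
  proof -
    have "0 \<le> s0 / 2 ^ J" using assms(1) by simp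
    then show ?thesis using assms(2) by linarith
  qed
  finally show ?thesis .
qed

lemma floorlog_two_bounds:
  assumes "1 \<le> n"
  shows "real n < 2 ^ floorlog 2 n" "2 ^ floorlog 2 n \<le> 2 * real n"
proof -
  define J where "J = floorlog 2 n"
  have "2 ^ (J - 1) \<le> n" "n < 2 ^ J"
    unfolding J_def using floorlog_bounds[of n 2] assms by auto
  moreover have "J \<noteq> 0" using \<open>n < 2 ^ J\<close> assms by (cases J) auto
  ultimately have "n < 2 ^ J" "2 ^ J \<le> 2 * n" by (cases J, simp_all)+
  then show "real n < 2 ^ floorlog 2 n" "2 ^ floorlog 2 n \<le> 2 * real n"
    unfolding J_def
    by (metis of_nat_less_iff of_nat_numeral of_nat_power,
        metis of_nat_le_iff of_nat_mult of_nat_numeral of_nat_power)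
qed

text \<open>For \<open>X \<le> n - 1\<close> the finest scale \<open>s0 / 2 ^ floorlog 2 n\<close>, which lies between
  \<open>s0 / (2 n)\<close> and \<open>s0 / n\<close>, already contributes order \<open>s0\<^sup>2 / n\<^sup>2\<close>.\<close>

lemma potential_lower_bound:
  assumes "0 < s0" "s0 \<le> 1" "X + 1 \<le> n"
  shows "s0\<^sup>2 / (4 * exp 1 * real n ^ 2) \<le> potential s0 (floorlog 2 n) n (real X)"
proof -
  define J where "J = floorlog 2 n"
  define s where "s = s0 / 2 ^ J"
  have n: "0 < real n" using assms(3) by simp
  have s: "0 < s" "s * real n \<le> 1" "s0 / (2 * real n) \<le> s"
  proof -
    have "s * real n = s0 * (real n / 2 ^ J)" unfolding s_def by simp
    also have "\<dots> \<le> 1"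
      using floorlog_two_bounds(1)[of n] assms by (intro mult_le_one) (auto simp: J_def)
    finally show "s * real n \<le> 1" .
    show "s0 / (2 * real n) \<le> s"
      unfolding s_def J_def using floorlog_two_bounds(2)[of n] assms n by (intro divide_left_mono) auto
  qed (simp add: s_def assms(1))
  have "exp (- 1) \<le> exp (- s * real n)" using s(2) by simp
  moreover have "s \<le> exp s - 1" using exp_ge_add_one_self[of s] by linarith
  ultimately have "exp (- 1) * s \<le> exp (- s * real n) * (exp s - 1)"
    using s(1) by (intro mult_mono) auto
  also have "\<dots> = exp (- s * (real n - 1)) - exp (- s * real n)"
    by (simp add: algebra_simps flip: exp_add)
  also have "\<dots> \<le> exp (- s * real X) - exp (- s * real n)"
  proof -
    have "real X \<le> real n - 1" using assms(3) by linarith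
    then show ?thesis using s(1) by (simp add: mult_left_mono)
  qed
  finally have "s * (exp (- 1) * s) \<le> s * (exp (- s * real X) - exp (- s * real n))"
    using s(1) by (intro mult_left_mono) auto
  also have "\<dots> \<le> potential s0 J n (real X)"
    unfolding potential_def s_def using assms(1,3)
    by (intro member_le_sum[where i=J] scale_term_nonneg) auto
  finally have "exp (- 1) * s\<^sup>2 \<le> potential s0 J n (real X)" by (simp add: power2_eq_square mult_ac)
  moreover have "s0\<^sup>2 / (4 * exp 1 * real n ^ 2) \<le> exp (- 1) * s\<^sup>2"
  proof -
    have "exp (- 1) * (s0 / (2 * real n))\<^sup>2 \<le> exp (- 1) * s\<^sup>2"
      using s(3) assms(1) n by (intro mult_left_mono power_mono) auto
    moreover have "exp (- 1) * (s0 / (2 * real n))\<^sup>2 = s0\<^sup>2 / (4 * exp 1 * real n ^ 2)"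
      by (simp add: exp_minus power2_eq_square field_simps)
    ultimately show ?thesis by simp
  qed
  ultimately show ?thesis unfolding J_def[symmetric] by linarith
qed

lemma mult_exp_neg_le_two_diff:
  fixes y :: real
  assumes "0 \<le> y"
  shows "y * exp (- y) \<le> 2 * (exp (- y / 2) - exp (- y))"
proof -
  have "y \<le> 2 * exp (y / 2) - 2" using exp_ge_add_one_self[of "y / 2"] by linarith
  then have "y \<le> 2 * (exp (y / 2) - 1)" by simp
  then have "y * exp (- y) \<le> 2 * (exp (y / 2) - 1) * exp (- y)" by (intro mult_right_mono) auto
  also have "\<dots> = 2 * (exp (y / 2) * exp (- y) - exp (- y))" by (simp add: algebra_simps)
  also have "exp (y / 2) * exp (- y) = exp (- y / 2)" by (simp flip: exp_add)
  finally show ?thesis .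
qed

text \<open>The scales halve, so the terms are dominated by a telescoping sum.\<close>

lemma sum_scales_exp_neg_le:
  fixes X s0 :: real
  assumes "0 < X" "0 \<le> s0"
  shows "(\<Sum>j\<le>J. s0 / 2 ^ j * exp (- (s0 / 2 ^ j) * X)) \<le> 2 / X"
proof -
  define f where "f j = exp (- (s0 / 2 ^ j) * X)" for j :: nat
  have "(\<Sum>j\<le>J. s0 / 2 ^ j * exp (- (s0 / 2 ^ j) * X)) \<le> (\<Sum>j<Suc J. 2 / X * (f (Suc j) - f j))"
    unfolding lessThan_Suc_atMost
  proof (rule sum_mono)
    fix j
    have "s0 / 2 ^ j * X * exp (- (s0 / 2 ^ j * X)) \<le> 2 * (exp (- (s0 / 2 ^ j * X) / 2) - exp (- (s0 / 2 ^ j * X)))"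
      using assms by (intro mult_exp_neg_le_two_diff) simp
    then show "s0 / 2 ^ j * exp (- (s0 / 2 ^ j) * X) \<le> 2 / X * (f (Suc j) - f j)"
      unfolding f_def using assms(1) by (simp add: field_simps)
  qed
  also have "\<dots> = 2 / X * (f (Suc J) - f 0)"
    by (simp only: sum_distrib_left[symmetric] sum_lessThan_telescope)
  also have "\<dots> \<le> 2 / X * 1"
  proof (rule mult_left_mono)
    have "f (Suc J) \<le> 1" "0 < f 0" unfolding f_def using assms by auto
    then show "f (Suc J) - f 0 \<le> 1" by linarith
  qed (use assms(1) in simp)
  finally show ?thesis by simp
qed

lemma exp_convex_mix:
  fixes l z :: real
  assumes "0 \<le> l" "l \<le> 1"
  shows "exp (l * z) - 1 \<le> l * (exp z - 1)"
  using convex_onD[OF exp_convex, of l 0 z] assms by (simp add: algebra_simps)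

text \<open>Convexity of \<open>exp\<close>: shrinking the exponent gap by the factor \<open>1 - e \<phi> / 4\<close>
  shrinks the difference at least as much.\<close>

lemma exp_drift_le_convex:
  fixes s Y N e \<phi> :: real
  assumes "0 < s" "0 \<le> Y" "0 \<le> \<phi>" "\<phi> \<le> 1" "0 < e" "e \<le> 1/2"
  shows "exp (- s * (N - Y) - e * s / 4 * (\<phi> * Y)) - exp (- s * N)
    \<le> (1 - e * \<phi> / 4) * (exp (- s * (N - Y)) - exp (- s * N))"
proof -
  let ?l = "1 - e * \<phi> / 4"
  have "e * \<phi> \<le> 1/2 * 1" using assms by (intro mult_mono) auto
  then have l: "0 \<le> ?l" "?l \<le> 1" using assms by auto
  have "exp (?l * (s * Y)) - 1 \<le> ?l * (exp (s * Y) - 1)"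
    using exp_convex_mix[OF l] .
  then have "exp (- s * N) * (exp (?l * (s * Y)) - 1) \<le> exp (- s * N) * (?l * (exp (s * Y) - 1))"
    by (intro mult_left_mono) auto
  moreover have "exp (- s * N) * (exp (?l * (s * Y)) - 1) = exp (- s * (N - Y) - e * s / 4 * (\<phi> * Y)) - exp (- s * N)"
    by (simp add: algebra_simps flip: exp_add)
  moreover have "exp (- s * N) * (?l * (exp (s * Y) - 1)) = ?l * (exp (- s * (N - Y)) - exp (- s * N))"
  proof -
    have "exp (- s * N) * exp (s * Y) = exp (- s * (N - Y))" by (simp add: algebra_simps flip: exp_add)
    moreover have "exp (- s * N) * (?l * (exp (s * Y) - 1)) = ?l * (exp (- s * N) * exp (s * Y) - exp (- s * N))"
      by (simp only: algebra_simps)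
    ultimately show ?thesis by simp
  qed
  ultimately show ?thesis by linarith
qed

lemma drift_gap_lower_bound:
  fixes s e \<phi> X :: real
  assumes "0 < s" "0 < e" "e \<le> 1/2" "0 \<le> \<phi>" "\<phi> \<le> 1" "0 < X" "s * X \<le> 2"
  shows "exp (- 2) * e * s\<^sup>2 * \<phi> * X / 8 \<le> s * exp (- s * X) * (1 - exp (- (e * s / 4) * (\<phi> * X)))"
proof -
  let ?y = "(e * s / 4) * (\<phi> * X)"
  have "?y = (e / 4) * \<phi> * (s * X)" by (simp add: algebra_simps)
  also have "\<dots> \<le> (1/8) * 1 * 2" using assms by (intro mult_mono) auto
  finally have "?y / 2 \<le> 1 - exp (- ?y)" using assms by (intro half_le_one_minus_exp_neg) auto
  moreover have "exp (- 2) \<le> exp (- s * X)" using assms by simp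
  ultimately have "s * exp (- 2) * (?y / 2) \<le> s * exp (- s * X) * (1 - exp (- ?y))"
    using assms by (intro mult_mono) auto
  then show ?thesis by (simp add: power2_eq_square algebra_simps)
qed

lemma exists_power_two_interval:
  fixes y :: real
  assumes "1 \<le> y"
  shows "\<exists>k. 2 ^ k \<le> y \<and> y < 2 ^ Suc k"
proof -
  obtain m where "y < 2 ^ m" using real_arch_pow[of 2 y] by auto
  define k where "k = (LEAST k. y < 2 ^ Suc k)"
  have "y < 2 ^ Suc m" using \<open>y < 2 ^ m\<close> by (simp add: less_le_trans)
  then have "y < 2 ^ Suc k" unfolding k_def by (rule LeastI)
  moreover have "2 ^ k \<le> y"
  proof (cases k)
    case (Suc k')
    then have "\<not> y < 2 ^ Suc k'" using not_less_Least[of k' "\<lambda>k. y < 2 ^ Suc k"] k_def by simp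
    then show ?thesis using Suc by simp
  qed (use assms in simp)
  ultimately show ?thesis by blast
qed

lemma exists_scale_near_inverse:
  fixes s0 :: real
  assumes "0 < s0" "s0 \<le> 1" "1 \<le> X" "X \<le> n" "n < 2 ^ J"
  shows "\<exists>k\<le>J. s0 / 2 ^ k * real X \<le> 2 \<and> s0\<^sup>2 / real X \<le> (s0 / 2 ^ k)\<^sup>2 * real X"
proof (cases "s0 * real X < 1")
  case True
  moreover have "s0\<^sup>2 * (1 / real X) \<le> s0\<^sup>2 * real X"
  proof (rule mult_left_mono)
    have "1 / real X \<le> 1" using assms(3) by simp
    then show "1 / real X \<le> real X" using assms(3) by linarith
  qed simp
  ultimately show ?thesis by (intro exI[of _ 0]) simp
next
  case False
  obtain k where k: "2 ^ k \<le> s0 * real X" "s0 * real X < 2 ^ Suc k"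
    using exists_power_two_interval[of "s0 * real X"] False by auto
  have "s0 * real X \<le> real X" using assms(1-3) by (simp add: mult_left_le_one_le)
  moreover have "real n < 2 ^ J" using assms(5) by (metis of_nat_less_iff of_nat_numeral of_nat_power)
  ultimately have "(2::real) ^ k < 2 ^ J" using k(1) assms(4) by linarith
  then have "k \<le> J" by (simp add: power_strict_increasing_iff)
  moreover have "1 \<le> s0 / 2 ^ k * real X" "s0 / 2 ^ k * real X \<le> 2"
    using k by (simp_all add: field_simps)
  moreover have "s0\<^sup>2 / real X \<le> (s0 / 2 ^ k)\<^sup>2 * real X"
  proof -
    have "1 \<le> (s0 / 2 ^ k * real X)\<^sup>2" using calculation(2) by (simp add: one_le_power)
    then have "1 / real X \<le> (s0 / 2 ^ k)\<^sup>2 * real X"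
      using assms(3) by (simp add: power2_eq_square field_simps)
    moreover have "s0\<^sup>2 / real X \<le> 1 / real X"
      using assms(1-3) by (intro divide_right_mono) (auto simp: power_le_one)
    ultimately show ?thesis by linarith
  qed
  ultimately show ?thesis by blast
qed

definition potential_rate :: "real \<Rightarrow> real" where
  "potential_rate e = e * (e / 4)\<^sup>2 / (16 * exp 2)"

lemma potential_rate_pos: "0 < e \<Longrightarrow> 0 < potential_rate e"
  unfolding potential_rate_def by simp

lemma potential_rate_le:
  assumes "0 < e" "e \<le> 1/2"
  shows "potential_rate e \<le> e / 4"
proof -
  have "(e / 4)\<^sup>2 \<le> 1" using assms by (simp add: power_le_one)
  moreover have "1 \<le> 4 * exp (2::real)" using exp_ge_add_one_self[of 2] by linarith
  ultimately have "e * (e / 4)\<^sup>2 \<le> e * (4 * exp 2)" using assms(1) by (intro mult_left_mono) auto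
  then show ?thesis unfolding potential_rate_def by (simp add: divide_le_eq)
qed

text \<open>Few 0-nodes: the scale \<open>s\<close> with \<open>s X \<approx> 1\<close> loses a fixed fraction of its
  contribution, which is a fraction of order \<open>\<phi>\<close> of the whole potential since the
  potential is at most \<open>2 / X\<close>.\<close>

lemma potential_gap_of_few_zeros:
  fixes e \<phi> :: real
  assumes "0 < e" "e \<le> 1/2" "0 \<le> \<phi>" "\<phi> \<le> 1" "1 \<le> X" "X \<le> n" "n < 2 ^ J"
  shows "potential_rate e * \<phi> * potential (e / 4) J n (real X)
    \<le> (\<Sum>j\<le>J. e / 4 / 2 ^ j * exp (- (e / 4 / 2 ^ j) * real X)
          * (1 - exp (- (e * (e / 4 / 2 ^ j) / 4) * (\<phi> * real X))))"
proof -
  define s0 where "s0 = e / 4"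
  have s0: "0 < s0" "s0 \<le> 1" using assms(1,2) unfolding s0_def by auto
  have X: "1 \<le> real X" using assms(5) by simp
  obtain k where k: "k \<le> J" "s0 / 2 ^ k * real X \<le> 2" "s0\<^sup>2 / real X \<le> (s0 / 2 ^ k)\<^sup>2 * real X"
    using exists_scale_near_inverse[OF s0 assms(5-7)] by blast
  have "potential s0 J n (real X) \<le> (\<Sum>j\<le>J. s0 / 2 ^ j * exp (- (s0 / 2 ^ j) * real X))"
    unfolding potential_def using s0 by (intro sum_mono mult_left_mono) auto
  also have "\<dots> \<le> 2 / real X" using sum_scales_exp_neg_le[of "real X" s0 J] s0 X by simp
  finally have "potential_rate e * \<phi> * potential s0 J n (real X) \<le> potential_rate e * \<phi> * (2 / real X)"
    using potential_rate_pos[OF assms(1)] assms(3) by (intro mult_left_mono) auto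
  also have "\<dots> = exp (- 2) * e * \<phi> / 8 * (s0\<^sup>2 / real X)"
    unfolding potential_rate_def s0_def by (simp add: exp_minus field_simps)
  also have "\<dots> \<le> exp (- 2) * e * \<phi> / 8 * ((s0 / 2 ^ k)\<^sup>2 * real X)"
    using k(3) assms(1,3) by (intro mult_left_mono) auto
  also have "\<dots> = exp (- 2) * e * (s0 / 2 ^ k)\<^sup>2 * \<phi> * real X / 8"
    by (simp only: mult_ac times_divide_eq_left times_divide_eq_right)
  also have "\<dots> \<le> s0 / 2 ^ k * exp (- (s0 / 2 ^ k) * real X) * (1 - exp (- (e * (s0 / 2 ^ k) / 4) * (\<phi> * real X)))"
    by (rule drift_gap_lower_bound) (use s0 k(2) X assms(1-4) in auto)
  also have "\<dots> \<le> (\<Sum>j\<le>J. s0 / 2 ^ j * exp (- (s0 / 2 ^ j) * real X) * (1 - exp (- (e * (s0 / 2 ^ j) / 4) * (\<phi> * real X))))"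
  proof (rule member_le_sum)
    fix j
    have "0 \<le> e * (s0 / 2 ^ j) / 4 * (\<phi> * real X)" using s0 assms(1,3) by simp
    then show "0 \<le> s0 / 2 ^ j * exp (- (s0 / 2 ^ j) * real X) * (1 - exp (- (e * (s0 / 2 ^ j) / 4) * (\<phi> * real X)))"
      using s0 by simp
  qed (use k(1) in simp_all)
  finally show ?thesis unfolding s0_def .
qed

lemma potential_drift_of_many_zeros:
  fixes e \<phi> :: real
  assumes "0 < e" "e \<le> 1/2" "0 \<le> \<phi>" "\<phi> \<le> 1" "X \<le> n" "n - X \<le> X"
  shows "(\<Sum>j\<le>J. e / 4 / 2 ^ j * (exp (- (e / 4 / 2 ^ j) * real X
            - e * (e / 4 / 2 ^ j) / 4 * (\<phi> * real (min X (n - X)))) - exp (- (e / 4 / 2 ^ j) * real n)))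
    \<le> (1 - potential_rate e * \<phi>) * potential (e / 4) J n (real X)"
proof -
  have "(\<Sum>j\<le>J. e / 4 / 2 ^ j * (exp (- (e / 4 / 2 ^ j) * real X
            - e * (e / 4 / 2 ^ j) / 4 * (\<phi> * real (min X (n - X)))) - exp (- (e / 4 / 2 ^ j) * real n)))
      \<le> (\<Sum>j\<le>J. e / 4 / 2 ^ j * ((1 - potential_rate e * \<phi>)
            * (exp (- (e / 4 / 2 ^ j) * real X) - exp (- (e / 4 / 2 ^ j) * real n))))"
  proof (intro sum_mono mult_left_mono)
    fix j
    let ?s = "e / 4 / 2 ^ j"
    have "exp (- ?s * (real n - real (n - X)) - e * ?s / 4 * (\<phi> * real (n - X))) - exp (- ?s * real n)
        \<le> (1 - e * \<phi> / 4) * (exp (- ?s * (real n - real (n - X))) - exp (- ?s * real n))"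
      by (rule exp_drift_le_convex) (use assms(1-4) in auto)
    moreover have "real n - real (n - X) = real X" "min X (n - X) = n - X" using assms(5,6) by auto
    ultimately have "exp (- ?s * real X - e * ?s / 4 * (\<phi> * real (min X (n - X)))) - exp (- ?s * real n)
        \<le> (1 - e * \<phi> / 4) * (exp (- ?s * real X) - exp (- ?s * real n))"
      by simp
    also have "\<dots> \<le> (1 - potential_rate e * \<phi>) * (exp (- ?s * real X) - exp (- ?s * real n))"
    proof (rule mult_right_mono)
      have "potential_rate e * \<phi> \<le> e / 4 * \<phi>"
        using potential_rate_le[OF assms(1,2)] assms(3) by (rule mult_right_mono)
      then show "1 - e * \<phi> / 4 \<le> 1 - potential_rate e * \<phi>" by simp
      show "0 \<le> exp (- ?s * real X) - exp (- ?s * real n)"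
        using assms(1,5) by (auto intro!: divide_right_mono mult_left_mono)
    qed
    finally show "exp (- ?s * real X - e * ?s / 4 * (\<phi> * real (min X (n - X)))) - exp (- ?s * real n)
        \<le> (1 - potential_rate e * \<phi>) * (exp (- ?s * real X) - exp (- ?s * real n))" .
  qed (use assms(1) in simp)
  also have "\<dots> = (1 - potential_rate e * \<phi>) * potential (e / 4) J n (real X)"
    unfolding potential_def by (simp add: sum_distrib_left mult_ac)
  finally show ?thesis .
qed

lemma potential_drift_of_few_zeros:
  fixes e \<phi> :: real
  assumes "0 < e" "e \<le> 1/2" "0 \<le> \<phi>" "\<phi> \<le> 1" "1 \<le> X" "X \<le> n" "n < 2 ^ J" "X < n - X"
  shows "(\<Sum>j\<le>J. e / 4 / 2 ^ j * (exp (- (e / 4 / 2 ^ j) * real X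
            - e * (e / 4 / 2 ^ j) / 4 * (\<phi> * real (min X (n - X)))) - exp (- (e / 4 / 2 ^ j) * real n)))
    \<le> (1 - potential_rate e * \<phi>) * potential (e / 4) J n (real X)"
proof -
  have "(\<Sum>j\<le>J. e / 4 / 2 ^ j * (exp (- (e / 4 / 2 ^ j) * real X
            - e * (e / 4 / 2 ^ j) / 4 * (\<phi> * real X)) - exp (- (e / 4 / 2 ^ j) * real n)))
      = potential (e / 4) J n (real X) - (\<Sum>j\<le>J. e / 4 / 2 ^ j * exp (- (e / 4 / 2 ^ j) * real X)
          * (1 - exp (- (e * (e / 4 / 2 ^ j) / 4) * (\<phi> * real X))))"
    unfolding potential_def sum_subtractf[symmetric]
  proof (intro sum.cong refl)
    fix j
    let ?s = "e / 4 / 2 ^ j"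
    have "exp (- ?s * real X - e * ?s / 4 * (\<phi> * real X)) = exp (- ?s * real X) * exp (- (e * ?s / 4) * (\<phi> * real X))"
      by (simp flip: exp_add add: algebra_simps)
    moreover have "t * (a * b - c) = t * (a - c) - t * a * (1 - b)" for t a b c :: real
      by (simp add: algebra_simps)
    ultimately show "?s * (exp (- ?s * real X - e * ?s / 4 * (\<phi> * real X)) - exp (- ?s * real n))
        = ?s * (exp (- ?s * real X) - exp (- ?s * real n))
          - ?s * exp (- ?s * real X) * (1 - exp (- (e * ?s / 4) * (\<phi> * real X)))"
      by (simp only:)
  qed
  moreover have "min X (n - X) = X" using assms(8) by simp
  ultimately show ?thesis
    using potential_gap_of_few_zeros[OF assms(1-7)] by (simp add: left_diff_distrib)
qed

lemma potential_drift:
  fixes e \<phi> :: real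
  assumes "0 < e" "e \<le> 1/2" "0 \<le> \<phi>" "\<phi> \<le> 1" "1 \<le> X" "X \<le> n" "n < 2 ^ J"
  shows "(\<Sum>j\<le>J. e / 4 / 2 ^ j * (exp (- (e / 4 / 2 ^ j) * real X
            - e * (e / 4 / 2 ^ j) / 4 * (\<phi> * real (min X (n - X)))) - exp (- (e / 4 / 2 ^ j) * real n)))
    \<le> (1 - potential_rate e * \<phi>) * potential (e / 4) J n (real X)"
  using potential_drift_of_many_zeros[OF assms(1-4,6)] potential_drift_of_few_zeros[OF assms]
  by (cases "n - X \<le> X") simp_all

section \<open>The process over many rounds\<close>

lemma round_step_support:
  assumes "regular_graph n d E" "2 \<le> n" "y \<in> set_pmf (round_step n \<alpha> E x)" "v \<in> {1..n}"
  shows "\<exists>u. (u = v \<or> E v u) \<and> y v = x u"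
proof -
  have "y v \<in> set_pmf (node_step \<alpha> E x v)"
    using assms(3,4) unfolding round_step_def by (auto simp: set_Pi_pmf PiE_dflt_def)
  then show ?thesis
    using regular_graph_neighbours_finite[OF assms(1)] regular_graph_neighbours_nonempty[OF assms(1,2,4)]
    unfolding node_step_def by (auto simp: set_pmf_of_set split: if_splits)
qed

lemma round_step_opinion_held_before:
  assumes "regular_graph n d E" "2 \<le> n" "y \<in> set_pmf (round_step n \<alpha> E x)" "v \<in> {1..n}"
  shows "\<exists>u\<in>{1..n}. y v = x u"
proof -
  obtain u where "u = v \<or> E v u" "y v = x u" using round_step_support[OF assms] by blast
  moreover from this(1) have "u \<in> {1..n}" using regular_graph_edge_vertices[OF assms(1)] assms(4) by blast
  ultimately show ?thesis by blast
qed

lemma round_step_zero_nodes_empty: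
  assumes "regular_graph n d E" "2 \<le> n" "y \<in> set_pmf (round_step n \<alpha> E x)" "zero_nodes n x = {}"
  shows "zero_nodes n y = {}"
proof -
  have "y v \<noteq> 0" if v: "v \<in> {1..n}" for v
  proof -
    obtain u where "u \<in> {1..n}" "y v = x u" using round_step_opinion_held_before[OF assms(1-3) v] ..
    then show ?thesis using assms(4) unfolding zero_nodes_def by auto
  qed
  then show ?thesis unfolding zero_nodes_def by auto
qed

lemma run_opinions_less:
  assumes "\<forall>t\<ge>1. \<forall>x. regular_graph n d (Adv t x)" "2 \<le> n" "\<forall>v\<in>{1..n}. x0 v < \<kappa>"
    and "y \<in> set_pmf (run n \<alpha> Adv x0 t)" "v \<in> {1..n}"
  shows "y v < \<kappa>"
  using assms(4,5)
proof (induction t arbitrary: y v)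
  case 0
  then show ?case using assms(3) by simp
next
  case (Suc t)
  then obtain x where "x \<in> set_pmf (run n \<alpha> Adv x0 t)" "y \<in> set_pmf (round_step n \<alpha> (Adv (Suc t) x) x)"
    by auto
  moreover have "regular_graph n d (Adv (Suc t) x)" using assms(1) by simp
  ultimately obtain u where "u \<in> {1..n}" "y v = x u"
    using round_step_opinion_held_before[OF _ assms(2) _ Suc.prems(2)] by blast
  then show ?case using Suc.IH \<open>x \<in> set_pmf (run n \<alpha> Adv x0 t)\<close> by simp
qed

lemma expectation_run_le_prod:
  fixes f :: "(nat \<Rightarrow> nat) \<Rightarrow> real" and c :: "nat \<Rightarrow> real"
  assumes "\<forall>t\<ge>1. \<forall>x. regular_graph n d (Adv t x)" "2 \<le> n" "\<forall>v\<in>{1..n}. x0 v < \<kappa>"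
    and f: "\<And>y. 0 \<le> f y" "\<And>y. f y \<le> B" and c: "\<And>t. 0 \<le> c t"
    and step: "\<And>t x. \<forall>v\<in>{1..n}. x v < \<kappa> \<Longrightarrow>
      measure_pmf.expectation (round_step n \<alpha> (Adv (Suc t) x) x) f \<le> c (Suc t) * f x"
  shows "measure_pmf.expectation (run n \<alpha> Adv x0 t) f \<le> (\<Prod>i\<in>{1..t}. c i) * f x0"
proof -
  have nn_integral_eq: "(\<integral>\<^sup>+y. ennreal (f y) \<partial>measure_pmf p) = ennreal (measure_pmf.expectation p f)"
    for p :: "(nat \<Rightarrow> nat) pmf"
    using f by (intro nn_integral_eq_integral measure_pmf.integrable_const_bound[where B=B]) auto
  have "(\<integral>\<^sup>+y. ennreal (f y) \<partial>measure_pmf (run n \<alpha> Adv x0 t)) \<le> ennreal ((\<Prod>i\<in>{1..t}. c i) * f x0)"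
  proof (induction t)
    case 0
    then show ?case by (simp add: nn_integral_return)
  next
    case (Suc t)
    have "(\<integral>\<^sup>+y. ennreal (f y) \<partial>measure_pmf (run n \<alpha> Adv x0 (Suc t)))
        = (\<integral>\<^sup>+x. (\<integral>\<^sup>+y. ennreal (f y) \<partial>measure_pmf (round_step n \<alpha> (Adv (Suc t) x) x))
            \<partial>measure_pmf (run n \<alpha> Adv x0 t))"
      by simp
    also have "\<dots> = (\<integral>\<^sup>+x. ennreal (measure_pmf.expectation (round_step n \<alpha> (Adv (Suc t) x) x) f)
            \<partial>measure_pmf (run n \<alpha> Adv x0 t))"
      by (simp only: nn_integral_eq)
    also have "\<dots> \<le> (\<integral>\<^sup>+x. ennreal (c (Suc t) * f x) \<partial>measure_pmf (run n \<alpha> Adv x0 t))"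
    proof (intro nn_integral_mono_AE AE_pmfI ennreal_leI step ballI)
      fix x v assume "x \<in> set_pmf (run n \<alpha> Adv x0 t)" "v \<in> {1..n}"
      then show "x v < \<kappa>" by (rule run_opinions_less[OF assms(1-3)])
    qed
    also have "\<dots> = ennreal (c (Suc t)) * (\<integral>\<^sup>+x. ennreal (f x) \<partial>measure_pmf (run n \<alpha> Adv x0 t))"
      using c f by (simp add: ennreal_mult nn_integral_cmult)
    also have "\<dots> \<le> ennreal (c (Suc t)) * ennreal ((\<Prod>i\<in>{1..t}. c i) * f x0)"
      by (rule mult_left_mono[OF Suc.IH]) simp
    also have "\<dots> = ennreal ((\<Prod>i\<in>{1..Suc t}. c i) * f x0)"
      using c f by (simp add: ennreal_mult[symmetric] prod.nat_ivl_Suc' prod_nonneg algebra_simps)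
    finally show ?case .
  qed
  then show ?thesis
    using c f by (simp add: nn_integral_eq ennreal_le_iff prod_nonneg)
qed

lemma integrable_exp_neg_nat:
  fixes g :: "'a \<Rightarrow> nat"
  assumes "0 \<le> s"
  shows "integrable (measure_pmf p) (\<lambda>y. exp (- s * real (g y)))"
  using assms by (intro measure_pmf.integrable_const_bound[where B=1]) auto

lemma expectation_potential:
  fixes g :: "'a \<Rightarrow> nat"
  assumes "0 \<le> s0"
  shows "measure_pmf.expectation p (\<lambda>y. potential s0 J n (real (g y)))
    = (\<Sum>j\<le>J. s0 / 2 ^ j * (measure_pmf.expectation p (\<lambda>y. exp (- (s0 / 2 ^ j) * real (g y)))
        - exp (- (s0 / 2 ^ j) * real n)))"
proof -
  have int: "integrable (measure_pmf p) (\<lambda>y. exp (- (s0 / 2 ^ j) * real (g y)))" for j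
    using assms by (intro integrable_exp_neg_nat) simp
  have "measure_pmf.expectation p (\<lambda>y. potential s0 J n (real (g y)))
      = (\<Sum>j\<le>J. measure_pmf.expectation p
          (\<lambda>y. s0 / 2 ^ j * (exp (- (s0 / 2 ^ j) * real (g y)) - exp (- (s0 / 2 ^ j) * real n))))"
    unfolding potential_def by (intro Bochner_Integration.integral_sum integrable_mult_right
        Bochner_Integration.integrable_diff int) simp
  also have "\<dots> = (\<Sum>j\<le>J. s0 / 2 ^ j * (measure_pmf.expectation p (\<lambda>y. exp (- (s0 / 2 ^ j) * real (g y)))
        - exp (- (s0 / 2 ^ j) * real n)))"
    by (intro sum.cong refl)
       (simp only: Bochner_Integration.integral_mult_right_zero Bochner_Integration.integral_diff[OF int]
         measure_pmf.integrable_const, simp)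
  finally show ?thesis .
qed

text \<open>Extinct configurations get potential 0: extinction is absorbing, and its probability is
  bounded separately through the supermartingale \<open>exp (- \<epsilon> X / 4)\<close>.\<close>

definition config_potential :: "real \<Rightarrow> nat \<Rightarrow> (nat \<Rightarrow> nat) \<Rightarrow> real" where
  "config_potential e n y =
    (if zero_nodes n y = {} then 0 else potential (e / 4) (floorlog 2 n) n (real (card (zero_nodes n y))))"

context biased_voter
begin

lemma config_potential_nonneg: "0 \<le> config_potential \<epsilon> n y"
  unfolding config_potential_def using \<epsilon>_pos card_zero_nodes_le[of n y]
  by (auto intro: potential_nonneg)

lemma config_potential_le_1: "config_potential \<epsilon> n y \<le> 1"
  unfolding config_potential_def using \<epsilon>_pos \<epsilon>_le_half by (auto intro: potential_le_1)

lemma expectation_round_step_potential: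
  assumes "regular_graph n d E" "\<phi> \<le> conductance n d E" "\<forall>w\<in>{1..n}. x w < \<kappa>"
    and "zero_nodes n x \<noteq> {}"
  defines "J \<equiv> floorlog 2 n"
  shows "measure_pmf.expectation (round_step n \<alpha> E x) (\<lambda>y. potential (\<epsilon> / 4) J n (real (card (zero_nodes n y))))
    \<le> (1 - potential_rate \<epsilon> * max \<phi> 0) * potential (\<epsilon> / 4) J n (real (card (zero_nodes n x)))"
proof -
  let ?X = "card (zero_nodes n x)"
  have "1 \<le> ?X" using assms(4) finite_subset[OF zero_nodes_subset] by (simp add: Suc_le_eq card_gt_0_iff)
  have "n < 2 ^ J" unfolding J_def using floorlog_bounds[of n 2] two_le_n by simp
  have "max \<phi> 0 \<le> 1" using assms(2) conductance_le_1[OF assms(1) two_le_n] by simp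
  have "measure_pmf.expectation (round_step n \<alpha> E x) (\<lambda>y. potential (\<epsilon> / 4) J n (real (card (zero_nodes n y))))
      \<le> (\<Sum>j\<le>J. \<epsilon> / 4 / 2 ^ j * (exp (- (\<epsilon> / 4 / 2 ^ j) * real ?X
            - \<epsilon> * (\<epsilon> / 4 / 2 ^ j) / 4 * (max \<phi> 0 * real (min ?X (n - ?X)))) - exp (- (\<epsilon> / 4 / 2 ^ j) * real n)))"
    unfolding expectation_potential[OF less_imp_le[OF divide_pos_pos[OF \<epsilon>_pos zero_less_numeral]]]
  proof (intro sum_mono mult_left_mono diff_right_mono)
    fix j
    have "\<epsilon> / 4 / 2 ^ j \<le> \<epsilon> / 4"
      using divide_left_mono[of 1 "2 ^ j" "\<epsilon> / 4"] \<epsilon>_pos by simp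
    then show "measure_pmf.expectation (round_step n \<alpha> E x) (\<lambda>y. exp (- (\<epsilon> / 4 / 2 ^ j) * real (card (zero_nodes n y))))
        \<le> exp (- (\<epsilon> / 4 / 2 ^ j) * real ?X
            - \<epsilon> * (\<epsilon> / 4 / 2 ^ j) / 4 * (max \<phi> 0 * real (min ?X (n - ?X))))"
      using \<epsilon>_pos by (intro expectation_round_step_exp_neg_zero_nodes[OF assms(1-3)]) auto
  qed (use \<epsilon>_pos in simp)
  also have "\<dots> \<le> (1 - potential_rate \<epsilon> * max \<phi> 0) * potential (\<epsilon> / 4) J n (real ?X)"
    using \<epsilon>_pos \<epsilon>_le_half \<open>max \<phi> 0 \<le> 1\<close> \<open>1 \<le> ?X\<close> card_zero_nodes_le \<open>n < 2 ^ J\<close>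
    by (intro potential_drift) auto
  finally show ?thesis .
qed

lemma expectation_round_step_config_potential:
  assumes "regular_graph n d E" "\<phi> \<le> conductance n d E" "\<forall>w\<in>{1..n}. x w < \<kappa>"
  shows "measure_pmf.expectation (round_step n \<alpha> E x) (config_potential \<epsilon> n)
    \<le> exp (- (potential_rate \<epsilon> * max \<phi> 0)) * config_potential \<epsilon> n x"
proof (cases "zero_nodes n x = {}")
  case True
  then have "measure_pmf.expectation (round_step n \<alpha> E x) (config_potential \<epsilon> n)
      = measure_pmf.expectation (round_step n \<alpha> E x) (\<lambda>_. 0)"
    using round_step_zero_nodes_empty[OF assms(1) two_le_n]
    by (intro integral_cong_AE) (auto intro!: AE_pmfI simp: config_potential_def)
  then show ?thesis using True by (simp add: config_potential_def)
next
  case False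
  let ?G = "\<lambda>y. potential (\<epsilon> / 4) (floorlog 2 n) n (real (card (zero_nodes n y)))"
  have G_nonneg: "0 \<le> ?G y" for y
    using \<epsilon>_pos card_zero_nodes_le[of n y] by (intro potential_nonneg) auto
  have "measure_pmf.expectation (round_step n \<alpha> E x) (config_potential \<epsilon> n)
      \<le> measure_pmf.expectation (round_step n \<alpha> E x) ?G"
  proof (intro integral_mono measure_pmf.integrable_const_bound[where B=1] AE_I2)
    fix y
    show "config_potential \<epsilon> n y \<le> ?G y"
      using G_nonneg[of y] by (cases "zero_nodes n y = {}") (simp_all add: config_potential_def)
    show "norm (config_potential \<epsilon> n y) \<le> 1"
      using config_potential_nonneg config_potential_le_1 by simp
    show "norm (?G y) \<le> 1"
      using G_nonneg[of y] potential_le_1[of "\<epsilon> / 4"] \<epsilon>_pos \<epsilon>_le_half by simp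
  qed simp_all
  also have "\<dots> \<le> (1 - potential_rate \<epsilon> * max \<phi> 0) * ?G x"
    by (rule expectation_round_step_potential[OF assms False])
  also have "\<dots> \<le> exp (- (potential_rate \<epsilon> * max \<phi> 0)) * ?G x"
    using G_nonneg exp_ge_add_one_self[of "- (potential_rate \<epsilon> * max \<phi> 0)"]
    by (intro mult_right_mono) auto
  finally show ?thesis using False by (simp add: config_potential_def)
qed

lemma expectation_round_step_exp_neg_zero_nodes_le:
  assumes "regular_graph n d E" "\<phi> \<le> conductance n d E" "\<forall>w\<in>{1..n}. x w < \<kappa>"
  shows "measure_pmf.expectation (round_step n \<alpha> E x) (\<lambda>y. exp (- (\<epsilon> / 4) * real (card (zero_nodes n y))))
    \<le> exp (- (\<epsilon> / 4) * real (card (zero_nodes n x)))"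
proof (rule order_trans[OF expectation_round_step_exp_neg_zero_nodes[OF assms]])
  have "0 \<le> \<epsilon> * (\<epsilon> / 4) / 4 * (max \<phi> 0 * real (min (card (zero_nodes n x)) (n - card (zero_nodes n x))))"
    using \<epsilon>_pos by simp
  then show "exp (- (\<epsilon> / 4) * real (card (zero_nodes n x)) - \<epsilon> * (\<epsilon> / 4) / 4
        * (max \<phi> 0 * real (min (card (zero_nodes n x)) (n - card (zero_nodes n x)))))
      \<le> exp (- (\<epsilon> / 4) * real (card (zero_nodes n x)))"
    by simp
qed (use \<epsilon>_pos in simp_all)

end

lemma prob_le_expectation_of_indicator_le:
  fixes f :: "'a \<Rightarrow> real"
  assumes "\<And>y. indicator A y \<le> f y" "\<And>y. f y \<le> B"
  shows "measure_pmf.prob p A \<le> measure_pmf.expectation p f"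
proof -
  have "0 \<le> f y" for y using order_trans[OF _ assms(1)[of y]] by simp
  then have "integrable (measure_pmf p) f"
    using assms(2) by (intro measure_pmf.integrable_const_bound[where B=B]) auto
  moreover have "integrable (measure_pmf p) (indicator A :: 'a \<Rightarrow> real)"
    by (intro measure_pmf.integrable_const_bound[where B=1]) auto
  ultimately have "measure_pmf.expectation p (indicator A) \<le> measure_pmf.expectation p f"
    using assms(1) by (intro integral_mono)
  then show ?thesis by simp
qed

lemma prob_all_zero_ge:
  "1 - measure_pmf.prob p {y. zero_nodes n y = {}}
     - measure_pmf.prob p {y. zero_nodes n y \<noteq> {} \<and> card (zero_nodes n y) < n}
   \<le> measure_pmf.prob p {y. \<forall>v\<in>{1..n}. y v = 0}"
proof -
  define A where "A = {y :: nat \<Rightarrow> nat. \<forall>v\<in>{1..n}. y v = 0}"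
  define B1 where "B1 = {y. zero_nodes n y = {}}"
  define B2 where "B2 = {y. zero_nodes n y \<noteq> {} \<and> card (zero_nodes n y) < n}"
  have "UNIV - A \<subseteq> B1 \<union> B2"
  proof
    fix y assume "y \<in> UNIV - A"
    then obtain v where "v \<in> {1..n}" "y v \<noteq> 0" unfolding A_def by auto
    moreover from this(2) have "v \<notin> zero_nodes n y" by (simp add: zero_nodes_def)
    ultimately have "zero_nodes n y \<subset> {1..n}"
      using zero_nodes_subset[of n y] by (intro psubsetI) auto
    then have "card (zero_nodes n y) < card {1..n}" by (intro psubset_card_mono) simp_all
    then show "y \<in> B1 \<union> B2" unfolding B1_def B2_def by auto
  qed
  then have "measure_pmf.prob p (UNIV - A) \<le> measure_pmf.prob p (B1 \<union> B2)"
    by (rule measure_pmf.finite_measure_mono) simp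
  also have "\<dots> \<le> measure_pmf.prob p B1 + measure_pmf.prob p B2"
    by (rule measure_Un_le) simp_all
  finally show ?thesis
    using measure_pmf.prob_compl[of A p] unfolding A_def B1_def B2_def by simp
qed

lemma inverse_powers_le:
  fixes x s :: real
  assumes "2 \<le> x" "0 < s" "24 \<le> s\<^sup>2 * x"
  shows "1 / x ^ 2 + (1 / x ^ 5) / (s\<^sup>2 / (4 * exp 1 * x ^ 2)) \<le> 1 / x"
proof -
  have "s\<^sup>2 * x * 1 \<le> s\<^sup>2 * x * x" using assms(1) by (intro mult_left_mono) auto
  then have "8 * exp 1 \<le> s\<^sup>2 * x ^ 2" using assms(3) exp_le by (simp add: power2_eq_square algebra_simps)
  then have "(1 / x ^ 5) / (s\<^sup>2 / (4 * exp 1 * x ^ 2)) \<le> 1 / (2 * x)"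
    using assms(1,2) by (simp add: divide_le_eq field_simps power_def)
  moreover have "1 / x ^ 2 \<le> 1 / (2 * x)"
    using assms(1) by (simp add: divide_le_eq field_simps power2_eq_square)
  ultimately show ?thesis by simp
qed

lemma exp_neg_mult_ln:
  fixes x :: real
  assumes "0 < x"
  shows "exp (- (real k * ln x)) = 1 / x ^ k"
  using assms by (simp add: exp_minus exp_of_nat_mult inverse_eq_divide)

context biased_voter
begin

lemma prob_run_extinction:
  assumes "\<forall>t\<ge>1. \<forall>x. regular_graph n d (Adv t x) \<and> \<phi> t \<le> conductance n d (Adv t x)"
    and "\<forall>v\<in>{1..n}. x0 v < \<kappa>"
  shows "measure_pmf.prob (run n \<alpha> Adv x0 \<tau>) {y. zero_nodes n y = {}}
    \<le> exp (- (\<epsilon> / 4) * real (card (zero_nodes n x0)))"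
proof -
  let ?Z = "\<lambda>y. exp (- (\<epsilon> / 4) * real (card (zero_nodes n y)))"
  have "measure_pmf.prob (run n \<alpha> Adv x0 \<tau>) {y. zero_nodes n y = {}}
      \<le> measure_pmf.expectation (run n \<alpha> Adv x0 \<tau>) ?Z"
    using \<epsilon>_pos by (intro prob_le_expectation_of_indicator_le[where B=1]) (auto simp: indicator_def)
  also have "\<dots> \<le> (\<Prod>i\<in>{1..\<tau>}. 1) * ?Z x0"
  proof (rule expectation_run_le_prod[where B=1 and \<kappa>=\<kappa> and d=d])
    fix t x assume "\<forall>v\<in>{1..n}. x v < \<kappa>"
    moreover have "regular_graph n d (Adv (Suc t) x)" "\<phi> (Suc t) \<le> conductance n d (Adv (Suc t) x)"
      using assms(1) by auto
    ultimately show "measure_pmf.expectation (round_step n \<alpha> (Adv (Suc t) x) x) ?Z \<le> 1 * ?Z x"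
      using expectation_round_step_exp_neg_zero_nodes_le by simp
  qed (use assms \<epsilon>_pos two_le_n in auto)
  finally show ?thesis by simp
qed

lemma prob_run_unsettled:
  assumes "\<forall>t\<ge>1. \<forall>x. regular_graph n d (Adv t x) \<and> \<phi> t \<le> conductance n d (Adv t x)"
    and "\<forall>v\<in>{1..n}. x0 v < \<kappa>"
  shows "measure_pmf.prob (run n \<alpha> Adv x0 \<tau>) {y. zero_nodes n y \<noteq> {} \<and> card (zero_nodes n y) < n}
    \<le> exp (- (potential_rate \<epsilon> * (\<Sum>t=1..\<tau>. max (\<phi> t) 0))) / ((\<epsilon> / 4)\<^sup>2 / (4 * exp 1 * real n ^ 2))"
proof -
  define \<gamma> where "\<gamma> = (\<epsilon> / 4)\<^sup>2 / (4 * exp 1 * real n ^ 2)"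
  have "0 < \<gamma>" unfolding \<gamma>_def using \<epsilon>_pos two_le_n by simp
  have "measure_pmf.prob (run n \<alpha> Adv x0 \<tau>) {y. zero_nodes n y \<noteq> {} \<and> card (zero_nodes n y) < n}
      \<le> measure_pmf.expectation (run n \<alpha> Adv x0 \<tau>) (\<lambda>y. config_potential \<epsilon> n y / \<gamma>)"
  proof (rule prob_le_expectation_of_indicator_le[where B="1 / \<gamma>"])
    fix y
    show "config_potential \<epsilon> n y / \<gamma> \<le> 1 / \<gamma>"
      using config_potential_le_1 \<open>0 < \<gamma>\<close> by (simp add: divide_right_mono)
    have "\<gamma> \<le> config_potential \<epsilon> n y" if "zero_nodes n y \<noteq> {}" "card (zero_nodes n y) < n"
      unfolding \<gamma>_def config_potential_def using that \<epsilon>_pos \<epsilon>_le_half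
      by (simp add: potential_lower_bound)
    then show "indicator {y. zero_nodes n y \<noteq> {} \<and> card (zero_nodes n y) < n} y \<le> config_potential \<epsilon> n y / \<gamma>"
      using config_potential_nonneg \<open>0 < \<gamma>\<close> by (auto simp: indicator_def)
  qed
  also have "\<dots> = measure_pmf.expectation (run n \<alpha> Adv x0 \<tau>) (config_potential \<epsilon> n) / \<gamma>"
    by simp
  also have "\<dots> \<le> (\<Prod>i\<in>{1..\<tau>}. exp (- (potential_rate \<epsilon> * max (\<phi> i) 0))) * config_potential \<epsilon> n x0 / \<gamma>"
  proof (intro divide_right_mono expectation_run_le_prod[where B=1 and \<kappa>=\<kappa> and d=d])
    fix t x assume "\<forall>v\<in>{1..n}. x v < \<kappa>"
    moreover have "regular_graph n d (Adv (Suc t) x)" "\<phi> (Suc t) \<le> conductance n d (Adv (Suc t) x)"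
      using assms(1) by auto
    ultimately show "measure_pmf.expectation (round_step n \<alpha> (Adv (Suc t) x) x) (config_potential \<epsilon> n)
        \<le> exp (- (potential_rate \<epsilon> * max (\<phi> (Suc t)) 0)) * config_potential \<epsilon> n x"
      using expectation_round_step_config_potential by simp
  qed (use assms two_le_n \<open>0 < \<gamma>\<close> config_potential_nonneg config_potential_le_1 in auto)
  also have "\<dots> \<le> exp (- (potential_rate \<epsilon> * (\<Sum>t=1..\<tau>. max (\<phi> t) 0))) / \<gamma>"
  proof (intro divide_right_mono)
    have "(\<Prod>i\<in>{1..\<tau>}. exp (- (potential_rate \<epsilon> * max (\<phi> i) 0)))
        = exp (\<Sum>i\<in>{1..\<tau>}. - (potential_rate \<epsilon> * max (\<phi> i) 0))"
      by (rule exp_sum[symmetric]) simp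
    also have "\<dots> = exp (- (potential_rate \<epsilon> * (\<Sum>t=1..\<tau>. max (\<phi> t) 0)))"
      by (simp only: sum_negf sum_distrib_left)
    finally show "(\<Prod>i\<in>{1..\<tau>}. exp (- (potential_rate \<epsilon> * max (\<phi> i) 0))) * config_potential \<epsilon> n x0
        \<le> exp (- (potential_rate \<epsilon> * (\<Sum>t=1..\<tau>. max (\<phi> t) 0)))"
      using config_potential_le_1[of x0] config_potential_nonneg[of x0] by (simp add: mult_left_le)
  qed (use \<open>0 < \<gamma>\<close> in simp)
  finally show ?thesis unfolding \<gamma>_def .
qed

lemma prob_run_consensus:
  assumes "\<forall>t\<ge>1. \<forall>x. regular_graph n d (Adv t x) \<and> \<phi> t \<le> conductance n d (Adv t x)"
    and "\<forall>v\<in>{1..n}. x0 v < \<kappa>"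
    and "8 / \<epsilon> * ln (real n) \<le> real (card (zero_nodes n x0))"
    and "5 / potential_rate \<epsilon> * ln (real n) \<le> (\<Sum>t=1..\<tau>. \<phi> t)"
    and "24 / (\<epsilon> / 4)\<^sup>2 \<le> real n"
  shows "1 - 1 / real n \<le> measure_pmf.prob (run n \<alpha> Adv x0 \<tau>) {y. \<forall>v\<in>{1..n}. y v = 0}"
proof -
  let ?p = "run n \<alpha> Adv x0 \<tau>"
  have n: "2 \<le> real n" using two_le_n by simp
  have "exp (- (\<epsilon> / 4) * real (card (zero_nodes n x0))) \<le> exp (- (2 * ln (real n)))"
    using assms(3) \<epsilon>_pos by (simp add: field_simps)
  also have "\<dots> = 1 / real n ^ 2"
    using exp_neg_mult_ln[of "real n" 2] n by simp
  finally have extinction: "measure_pmf.prob ?p {y. zero_nodes n y = {}} \<le> 1 / real n ^ 2"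
    by (rule order_trans[OF prob_run_extinction[OF assms(1,2)]])
  have "5 * ln (real n) \<le> potential_rate \<epsilon> * (\<Sum>t=1..\<tau>. \<phi> t)"
    using assms(4) potential_rate_pos[OF \<epsilon>_pos] by (simp add: field_simps)
  also have "\<dots> \<le> potential_rate \<epsilon> * (\<Sum>t=1..\<tau>. max (\<phi> t) 0)"
    using potential_rate_pos[OF \<epsilon>_pos] by (intro mult_left_mono sum_mono) auto
  finally have "exp (- (potential_rate \<epsilon> * (\<Sum>t=1..\<tau>. max (\<phi> t) 0))) \<le> exp (- (5 * ln (real n)))"
    by simp
  also have "\<dots> = 1 / real n ^ 5"
    using exp_neg_mult_ln[of "real n" 5] n by simp
  finally have unsettled: "measure_pmf.prob ?p {y. zero_nodes n y \<noteq> {} \<and> card (zero_nodes n y) < n}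
      \<le> (1 / real n ^ 5) / ((\<epsilon> / 4)\<^sup>2 / (4 * exp 1 * real n ^ 2))"
    by (intro order_trans[OF prob_run_unsettled[OF assms(1,2)]] divide_right_mono divide_nonneg_nonneg) auto
  have "24 \<le> (\<epsilon> / 4)\<^sup>2 * real n" using assms(5) \<epsilon>_pos by (simp add: divide_le_eq mult.commute)
  then have "1 / real n ^ 2 + (1 / real n ^ 5) / ((\<epsilon> / 4)\<^sup>2 / (4 * exp 1 * real n ^ 2)) \<le> 1 / real n"
    using inverse_powers_le[OF n] \<epsilon>_pos by simp
  then show ?thesis using prob_all_zero_ge[of ?p n] extinction unsettled by linarith
qed

end

theorem theorem3:
  fixes \<epsilon> :: real
  assumes "0 < \<epsilon>"
  shows "\<exists>b > 0. \<exists>c > 0. \<exists>n0::nat. \<forall>n \<ge> n0. \<forall>(d::nat) (\<kappa>::nat) (\<alpha>::nat \<Rightarrow> real)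
           (\<phi>::nat \<Rightarrow> real) Adv (x0::nat \<Rightarrow> nat).
     \<kappa> \<le> n \<longrightarrow>
     \<alpha> 0 = 1 \<longrightarrow>
     (\<forall>i. 1 \<le> i \<and> i < \<kappa> \<longrightarrow> 0 \<le> \<alpha> i \<and> \<alpha> i \<le> 1 - \<epsilon>) \<longrightarrow>
     (\<forall>i j. 1 \<le> i \<and> i \<le> j \<and> j < \<kappa> \<longrightarrow> \<alpha> j \<le> \<alpha> i) \<longrightarrow>
     (\<forall>t \<ge> 1. \<forall>x. regular_graph n d (Adv t x) \<and> conductance n d (Adv t x) \<ge> \<phi> t) \<longrightarrow>
     (\<forall>v\<in>{1..n}. x0 v < \<kappa>) \<longrightarrow>
     real (card {v\<in>{1..n}. x0 v = 0}) \<ge> c * ln (real n) \<longrightarrow>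
     (\<exists>\<tau>. (\<Sum>t=1..\<tau>. \<phi> t) \<ge> b * ln (real n)) \<longrightarrow>
     measure_pmf.prob
        (run n \<alpha> Adv x0 (LEAST \<tau>. (\<Sum>t=1..\<tau>. \<phi> t) \<ge> b * ln (real n)))
        {x. \<forall>v\<in>{1..n}. x v = 0}
       \<ge> 1 - 1 / real n"
proof -
  define e where "e = min \<epsilon> (1/2)"
  have e: "0 < e" "e \<le> 1/2" "e \<le> \<epsilon>" using assms unfolding e_def by auto
  define b where "b = 5 / potential_rate e"
  define c where "c = 8 / e"
  define n0 where "n0 = nat \<lceil>24 / (e / 4)\<^sup>2\<rceil> + 2"
  have "0 < b" unfolding b_def using potential_rate_pos[OF e(1)] by simp
  have "0 < c" unfolding c_def using e(1) by simp
  show ?thesis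
  proof (rule exI[of _ b], rule conjI[OF \<open>0 < b\<close>], rule exI[of _ c], rule conjI[OF \<open>0 < c\<close>],
      rule exI[of _ n0], intro allI impI)
    fix n d \<kappa> :: nat and \<alpha> \<phi> :: "nat \<Rightarrow> real"
      and Adv :: "nat \<Rightarrow> (nat \<Rightarrow> nat) \<Rightarrow> nat \<Rightarrow> nat \<Rightarrow> bool" and x0 :: "nat \<Rightarrow> nat"
    assume "n0 \<le> n" "\<alpha> 0 = 1" "\<forall>i. 1 \<le> i \<and> i < \<kappa> \<longrightarrow> 0 \<le> \<alpha> i \<and> \<alpha> i \<le> 1 - \<epsilon>"
      and "\<forall>t\<ge>1. \<forall>x. regular_graph n d (Adv t x) \<and> \<phi> t \<le> conductance n d (Adv t x)"
      and "\<forall>v\<in>{1..n}. x0 v < \<kappa>" "c * ln (real n) \<le> real (card {v\<in>{1..n}. x0 v = 0})"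
      and "\<exists>\<tau>. b * ln (real n) \<le> (\<Sum>t=1..\<tau>. \<phi> t)"
    note hyps = this
    interpret biased_voter n \<kappa> \<alpha> e
      using hyps(1-3) e unfolding n0_def by unfold_locales force+
    show "1 - 1 / real n \<le> measure_pmf.prob
        (run n \<alpha> Adv x0 (LEAST \<tau>. (\<Sum>t=1..\<tau>. \<phi> t) \<ge> b * ln (real n))) {x. \<forall>v\<in>{1..n}. x v = 0}"
    proof (rule prob_run_consensus[OF hyps(4,5)])
      show "8 / e * ln (real n) \<le> real (card (zero_nodes n x0))"
        using hyps(6) unfolding c_def zero_nodes_def .
      show "5 / potential_rate e * ln (real n) \<le> (\<Sum>t=1..LEAST \<tau>. b * ln (real n) \<le> (\<Sum>t=1..\<tau>. \<phi> t). \<phi> t)"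
        using LeastI_ex[OF hyps(7)] unfolding b_def .
      show "24 / (e / 4)\<^sup>2 \<le> real n"
        using hyps(1) real_nat_ceiling_ge[of "24 / (e / 4)\<^sup>2"] unfolding n0_def by linarith
    qed
  qed
qed

end
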